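(* Let $M$ be a matroid with $\lambda(M)=\sigma(M)=k$ and $\rank(M)=r$, and let $C_1,\ldots,C_\ell$ be all the cocircuits of $M$ of size $k$. Then the crux $\chi(M)=M\setminus(C_1\cup\cdots\cup C_\ell)$ has rank $r-\ell$.
   Context: $\sigma(M)$ is the maximum number of pairwise disjoint bases of $M$; $\lambda(M)$ is the minimum size of a cocircuit (a minimal set meeting every base). The crux $\chi(M)$ of $M$ is the matroid obtained from $M$ by deleting all elements lying in some minimum-size cocircuit; if this removes all elements, $\chi(M)$ is the empty matroid (of rank $0$). *)

theory Defs
  imports Main
begin

definition matroid :: "'a set \<Rightarrow> ('a set \<Rightarrow> bool) \<Rightarrow> bool" where
  "matroid E indep \<longleftrightarrow>
     finite E \<and>
     (\<forall>X. indep X \<longrightarrow> X \<subseteq> E) \<and>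
     indep {} \<and>
     (\<forall>X Y. indep X \<and> Y \<subseteq> X \<longrightarrow> indep Y) \<and>
     (\<forall>X Y. indep X \<and> indep Y \<and> card X < card Y \<longrightarrow>
        (\<exists>y \<in> Y - X. indep (insert y X)))"

definition basis :: "'a set \<Rightarrow> ('a set \<Rightarrow> bool) \<Rightarrow> 'a set \<Rightarrow> bool" where
  "basis E indep B \<longleftrightarrow> indep B \<and> (\<forall>Y. indep Y \<and> B \<subseteq> Y \<longrightarrow> Y = B)"

definition mrank :: "'a set \<Rightarrow> ('a set \<Rightarrow> bool) \<Rightarrow> 'a set \<Rightarrow> nat" where
  "mrank E indep A = Max {card X | X. X \<subseteq> A \<and> indep X}"

definition matroid_rank :: "'a set \<Rightarrow> ('a set \<Rightarrow> bool) \<Rightarrow> nat" where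
  "matroid_rank E indep = mrank E indep E"

definition cocircuit :: "'a set \<Rightarrow> ('a set \<Rightarrow> bool) \<Rightarrow> 'a set \<Rightarrow> bool" where
  "cocircuit E indep C \<longleftrightarrow>
     C \<subseteq> E \<and>
     (\<forall>B. basis E indep B \<longrightarrow> C \<inter> B \<noteq> {}) \<and>
     (\<forall>D. D \<subset> C \<longrightarrow> (\<exists>B. basis E indep B \<and> D \<inter> B = {}))"

definition matroid_lambda :: "'a set \<Rightarrow> ('a set \<Rightarrow> bool) \<Rightarrow> nat" where
  "matroid_lambda E indep = Min {card C | C. cocircuit E indep C}"

definition matroid_sigma :: "'a set \<Rightarrow> ('a set \<Rightarrow> bool) \<Rightarrow> nat" where
  "matroid_sigma E indep = Max {card F | F.
      (\<forall>B \<in> F. basis E indep B) \<and> (\<forall>B1 \<in> F. \<forall>B2 \<in> F. B1 \<noteq> B2 \<longrightarrow> B1 \<inter> B2 = {})}"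

definition mdelete :: "'a set \<Rightarrow> ('a set \<Rightarrow> bool) \<Rightarrow> 'a set \<Rightarrow> 'a set \<times> ('a set \<Rightarrow> bool)" where
  "mdelete E indep X = (E - X, \<lambda>Y. indep Y \<and> Y \<subseteq> E - X)"

definition crux :: "'a set \<Rightarrow> ('a set \<Rightarrow> bool) \<Rightarrow> 'a set \<times> ('a set \<Rightarrow> bool)" where
  "crux E indep = mdelete E indep
     (\<Union> {C. cocircuit E indep C \<and> card C = matroid_lambda E indep})"

end

theory Submission
  imports Defs
begin

(* Write r(A) for the rank of A \<subseteq> E, k = \<sigma>(M), and fix a packing
   F of k pairwise disjoint bases.
   (1) Rank calculus: r is monotone, grows by at most one per element and is
       submodular; a set D meets every base iff r(E - D) < r(E).  Hence a cocircuit C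
       is the complement of a hyperplane: r(E - C) = r(E) - 1, and adding back any
       element of C restores full rank.
   (2) Counting: a cocircuit of size k meets each of the k disjoint bases of F, so it
       meets each of them in exactly one element and lies inside the union of F.
   (3) Cocircuit elimination: if distinct cocircuits C, C' share e, then
       (C \<union> C') - {e} still meets every base.  With (2), choosing the base of F
       containing e shows that distinct cocircuits of size k are disjoint.
   (4) Deleting l pairwise disjoint cocircuits lowers the rank by at least l, while
       a base of F loses at most one element per cocircuit of size k; so deleting
       all cocircuits of size k lowers the rank by exactly their number.
   The main theorem combines (4) with the rank of a deletion; the hypothesis
   \<lambda>(M) = k only serves to identify the deleted set with the crux. *)

lemma small_transversal:
  assumes fin: "finite C" "finite F"
    and disj: "\<forall>B1\<in>F. \<forall>B2\<in>F. B1 \<noteq> B2 \<longrightarrow> B1 \<inter> B2 = {}"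
    and meets: "\<forall>B\<in>F. C \<inter> B \<noteq> {}"
    and small: "card C \<le> card F"
  shows "\<forall>B\<in>F. card (C \<inter> B) = 1" and "C \<subseteq> \<Union>F"
proof -
  have pos: "1 \<le> card (C \<inter> B)" if "B \<in> F" for B
    using meets that fin(1) by (simp add: card_gt_0_iff Suc_le_eq)
  have sum_eq: "(\<Sum>B\<in>F. card (C \<inter> B)) = card (\<Union>B\<in>F. C \<inter> B)"
    using fin disj by (intro card_UN_disjoint[symmetric]) auto
  have sub: "(\<Union>B\<in>F. C \<inter> B) \<subseteq> C" by blast
  then have le_C: "card (\<Union>B\<in>F. C \<inter> B) \<le> card C" using card_mono[OF fin(1)] by blast
  show "\<forall>B\<in>F. card (C \<inter> B) = 1"
  proof
    fix B0 assume B0: "B0 \<in> F"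
    have "card (F - {B0}) \<le> (\<Sum>B\<in>F - {B0}. card (C \<inter> B))"
      using sum_mono[of "F - {B0}" "\<lambda>_. 1" "\<lambda>B. card (C \<inter> B)"] pos by simp
    moreover have "(\<Sum>B\<in>F. card (C \<inter> B)) = card (C \<inter> B0) + (\<Sum>B\<in>F - {B0}. card (C \<inter> B))"
      using fin(2) B0 by (simp add: sum.remove)
    moreover have "card (F - {B0}) + 1 = card F"
      using B0 fin(2) card_Diff1_less[of F B0] by simp
    ultimately show "card (C \<inter> B0) = 1"
      using sum_eq le_C small pos[OF B0] by linarith
  qed
  have "card F \<le> (\<Sum>B\<in>F. card (C \<inter> B))"
    using sum_mono[of F "\<lambda>_. 1" "\<lambda>B. card (C \<inter> B)"] pos by simp
  then have "card (\<Union>B\<in>F. C \<inter> B) = card C" using sum_eq le_C small by linarith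
  then have "(\<Union>B\<in>F. C \<inter> B) = C" using card_subset_eq[OF fin(1) sub] by blast
  then show "C \<subseteq> \<Union>F" by blast
qed

lemma rank_of_deletion:
  "matroid_rank (fst (mdelete E indep X)) (snd (mdelete E indep X)) = mrank E indep (E - X)"
proof -
  have "{card Y |Y. Y \<subseteq> E - X \<and> indep Y \<and> Y \<subseteq> E - X} = {card Y |Y. Y \<subseteq> E - X \<and> indep Y}"
    by auto
  then show ?thesis unfolding mdelete_def matroid_rank_def mrank_def by simp
qed

locale finite_matroid =
  fixes E :: "'a set" and indep :: "'a set \<Rightarrow> bool"
  assumes matroid: "matroid E indep"
begin

abbreviation rk :: "'a set \<Rightarrow> nat" where "rk \<equiv> mrank E indep"

definition basis_packing :: "'a set set \<Rightarrow> bool" where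
  "basis_packing F \<longleftrightarrow> (\<forall>B\<in>F. basis E indep B) \<and>
     (\<forall>B1\<in>F. \<forall>B2\<in>F. B1 \<noteq> B2 \<longrightarrow> B1 \<inter> B2 = {})"

lemma finite_E: "finite E"
  using matroid unfolding matroid_def by blast

lemma indep_subset_E: "indep X \<Longrightarrow> X \<subseteq> E"
  using matroid unfolding matroid_def by blast

lemma indep_finite: "indep X \<Longrightarrow> finite X"
  using indep_subset_E finite_E finite_subset by blast

lemma indep_empty: "indep {}"
  using matroid unfolding matroid_def by blast

lemma indep_subset: "indep X \<Longrightarrow> Y \<subseteq> X \<Longrightarrow> indep Y"
  using matroid unfolding matroid_def by blast

lemma indep_augment:
  "indep X \<Longrightarrow> indep Y \<Longrightarrow> card X < card Y \<Longrightarrow> \<exists>y \<in> Y - X. indep (insert y X)"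
  using matroid unfolding matroid_def by blast

lemma rank_candidates_finite: "finite {card X | X. X \<subseteq> A \<and> indep X}"
proof (rule finite_subset)
  show "{card X | X. X \<subseteq> A \<and> indep X} \<subseteq> {..card E}"
    using indep_subset_E finite_E by (auto intro: card_mono)
qed simp

lemma card_le_rank: "X \<subseteq> A \<Longrightarrow> indep X \<Longrightarrow> card X \<le> rk A"
  unfolding mrank_def using rank_candidates_finite by (intro Max_ge) auto

lemma rank_attained: "\<exists>X. X \<subseteq> A \<and> indep X \<and> card X = rk A"
proof -
  have "rk A \<in> {card X | X. X \<subseteq> A \<and> indep X}"
    unfolding mrank_def using rank_candidates_finite indep_empty by (intro Max_in) auto
  then show ?thesis by auto
qed

lemma rank_mono:
  assumes "A \<subseteq> A'"
  shows "rk A \<le> rk A'"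
proof -
  obtain X where "X \<subseteq> A" "indep X" "card X = rk A" using rank_attained by blast
  then show ?thesis using card_le_rank[of X A'] assms by auto
qed

lemma extend_to_rank:
  "indep I \<Longrightarrow> I \<subseteq> A \<Longrightarrow> \<exists>J. I \<subseteq> J \<and> J \<subseteq> A \<and> indep J \<and> card J = rk A"
proof (induction "rk A - card I" arbitrary: I rule: less_induct)
  case less
  show ?case
  proof (cases "card I < rk A")
    case False
    then show ?thesis using card_le_rank[OF less.prems(2,1)] less.prems by auto
  next
    case True
    obtain K where K: "K \<subseteq> A" "indep K" "card K = rk A"
      using rank_attained by blast
    obtain y where y: "y \<in> K - I" "indep (insert y I)"
      using indep_augment[OF less.prems(1) K(2)] True K(3) by auto
    have "card (insert y I) = card I + 1" using y indep_finite[OF less.prems(1)] by simp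
    then have "rk A - card (insert y I) < rk A - card I" using True by linarith
    moreover have "insert y I \<subseteq> A" using y K(1) less.prems(2) by blast
    ultimately have "\<exists>J. insert y I \<subseteq> J \<and> J \<subseteq> A \<and> indep J \<and> card J = rk A"
      using less.hyps y(2) by blast
    then show ?thesis by blast
  qed
qed

lemma basis_iff_full_rank: "basis E indep B \<longleftrightarrow> indep B \<and> card B = rk E"
proof
  assume b: "basis E indep B"
  then obtain J where J: "B \<subseteq> J" "indep J" "card J = rk E"
    using extend_to_rank[of B E] indep_subset_E unfolding basis_def by blast
  then show "indep B \<and> card B = rk E" using b unfolding basis_def by blast
next
  assume a: "indep B \<and> card B = rk E"
  show "basis E indep B" unfolding basis_def
  proof (intro conjI allI impI)
    show "indep B" using a by blast
    fix Y assume Y: "indep Y \<and> B \<subseteq> Y"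
    have "card Y \<le> card B" using card_le_rank[OF indep_subset_E] Y a by auto
    then show "Y = B" using card_seteq[OF indep_finite] Y by blast
  qed
qed

lemma basis_exists: "\<exists>B. basis E indep B"
  using rank_attained[of E] basis_iff_full_rank by blast

lemma meets_all_bases_iff: "(\<forall>B. basis E indep B \<longrightarrow> D \<inter> B \<noteq> {}) \<longleftrightarrow> rk (E - D) < rk E"
proof
  assume meets: "\<forall>B. basis E indep B \<longrightarrow> D \<inter> B \<noteq> {}"
  obtain X where X: "X \<subseteq> E - D" "indep X" "card X = rk (E - D)"
    using rank_attained by blast
  have "rk (E - D) \<le> rk E" by (rule rank_mono) auto
  moreover have "\<not> basis E indep X" using meets X(1) by blast
  then have "card X \<noteq> rk E" using X(2) basis_iff_full_rank by blast
  ultimately show "rk (E - D) < rk E" using X(3) by linarith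
next
  assume drop: "rk (E - D) < rk E"
  show "\<forall>B. basis E indep B \<longrightarrow> D \<inter> B \<noteq> {}"
  proof (intro allI impI notI)
    fix B assume b: "basis E indep B" and "D \<inter> B = {}"
    then have "B \<subseteq> E - D" using indep_subset_E unfolding basis_def by blast
    moreover have "indep B" "card B = rk E" using b basis_iff_full_rank by blast+
    ultimately show False using card_le_rank[of B "E - D"] drop by linarith
  qed
qed

lemma rank_insert_le: "rk (insert e A) \<le> rk A + 1"
proof -
  obtain X where X: "X \<subseteq> insert e A" "indep X" "card X = rk (insert e A)"
    using rank_attained by blast
  have "card (X - {e}) \<le> rk A" using X indep_subset by (intro card_le_rank) auto
  moreover have "card X \<le> card (X - {e}) + 1"
    using indep_finite[OF X(2)] by (cases "e \<in> X") (auto simp: card_Diff_singleton_if card_gt_0_iff)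
  ultimately show ?thesis using X by linarith
qed

lemma rank_submodular: "rk (X \<inter> Y) + rk (X \<union> Y) \<le> rk X + rk Y"
proof -
  obtain I where I: "I \<subseteq> X \<inter> Y" "indep I" "card I = rk (X \<inter> Y)"
    using rank_attained by blast
  obtain J where J: "I \<subseteq> J" "J \<subseteq> X \<union> Y" "indep J" "card J = rk (X \<union> Y)"
    using extend_to_rank[OF I(2), of "X \<union> Y"] I(1) by blast
  have fJ: "finite J" using indep_finite[OF J(3)] .
  have "card I \<le> card (J \<inter> X \<inter> Y)" using I J fJ by (intro card_mono) auto
  moreover have "card (J \<inter> X) + card (J \<inter> Y) = card J + card (J \<inter> X \<inter> Y)"
    using card_Un_Int[of "J \<inter> X" "J \<inter> Y"] fJ J(2)
    by (simp add: Int_Un_distrib[symmetric] Int_absorb2 Int_ac)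
  moreover have "card (J \<inter> X) \<le> rk X" "card (J \<inter> Y) \<le> rk Y"
    using indep_subset[OF J(3)] by (auto intro: card_le_rank)
  ultimately show ?thesis using I J by linarith
qed

text \<open>Cocircuits: each meets every base, so it is nonempty and its deletion drops the
  rank; by minimality, adding back any one of its elements restores full rank.\<close>

lemma cocircuit_subset_E: "cocircuit E indep C \<Longrightarrow> C \<subseteq> E"
  by (simp add: cocircuit_def)

lemma cocircuit_meets_basis: "cocircuit E indep C \<Longrightarrow> basis E indep B \<Longrightarrow> C \<inter> B \<noteq> {}"
  by (simp add: cocircuit_def)

lemma cocircuit_nonempty: "cocircuit E indep C \<Longrightarrow> C \<noteq> {}"
  using basis_exists cocircuit_meets_basis by fastforce

lemma cocircuit_rank_drop: "cocircuit E indep C \<Longrightarrow> rk (E - C) < rk E"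
  using meets_all_bases_iff[of C] cocircuit_meets_basis by blast

lemma cocircuit_add_back:
  assumes c: "cocircuit E indep C" and e: "e \<in> C"
  shows "rk (insert e (E - C)) = rk E"
proof -
  have "C - {e} \<subset> C" using e by auto
  then obtain B where "basis E indep B" "(C - {e}) \<inter> B = {}"
    using c unfolding cocircuit_def by (elim conjE) blast
  then have "\<not> rk (E - (C - {e})) < rk E" using meets_all_bases_iff[of "C - {e}"] by blast
  moreover have "E - (C - {e}) = insert e (E - C)" using e cocircuit_subset_E[OF c] by auto
  moreover have "rk (insert e (E - C)) \<le> rk E"
    using e cocircuit_subset_E[OF c] by (intro rank_mono) auto
  ultimately show ?thesis by simp
qed

lemma cocircuit_hyperplane:
  assumes c: "cocircuit E indep C"
  shows "rk (E - C) + 1 = rk E"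
proof -
  obtain e where "e \<in> C" using cocircuit_nonempty[OF c] by blast
  then have "rk E \<le> rk (E - C) + 1"
    using cocircuit_add_back[OF c] rank_insert_le[of e "E - C"] by simp
  then show ?thesis using cocircuit_rank_drop[OF c] by linarith
qed

lemma cocircuit_not_psubset:
  assumes c: "cocircuit E indep C" and c': "cocircuit E indep C'"
  shows "\<not> C' \<subset> C"
proof
  assume "C' \<subset> C"
  then obtain B where "basis E indep B" "C' \<inter> B = {}"
    using c unfolding cocircuit_def by (elim conjE) blast
  then show False using cocircuit_meets_basis[OF c'] by blast
qed

lemma cocircuit_drop_within:
  assumes c: "cocircuit E indep C" and A: "A \<subseteq> E" "C \<subseteq> A"
  shows "rk (A - C) < rk A"
proof (rule ccontr)
  assume no_drop: "\<not> ?thesis"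
  obtain X where X: "X \<subseteq> A - C" "indep X" "card X = rk (A - C)"
    using rank_attained by blast
  have cX: "card X = rk A" using card_le_rank[of X A] X no_drop by auto
  obtain Z where Z: "X \<subseteq> Z" "indep Z" "card Z = rk E"
    using extend_to_rank[OF X(2), of E] X A by blast
  have fZA: "finite (Z \<inter> A)" using indep_finite[OF Z(2)] by blast
  have "card (Z \<inter> A) \<le> rk A" using indep_subset[OF Z(2)] by (intro card_le_rank) auto
  moreover have "X \<subseteq> Z \<inter> A" using X Z by auto
  ultimately have "X = Z \<inter> A" using cX card_seteq[OF fZA] by simp
  then have "C \<inter> Z = {}" using X A by auto
  moreover have "basis E indep Z" using basis_iff_full_rank Z by auto
  ultimately show False using cocircuit_meets_basis[OF c] by blast
qed

lemma cocircuit_elimination: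
  assumes c: "cocircuit E indep C" and c': "cocircuit E indep C'" and ne: "C \<noteq> C'"
    and e: "e \<in> C" "e \<in> C'"
  shows "\<forall>B. basis E indep B \<longrightarrow> ((C \<union> C') - {e}) \<inter> B \<noteq> {}"
proof -
  obtain f where f: "f \<in> C'" "f \<notin> C"
    using cocircuit_not_psubset[OF c c'] ne by blast
  have "insert f (E - C') \<subseteq> (E - C) \<union> (E - C')" using f cocircuit_subset_E[OF c'] by blast
  then have "rk E \<le> rk ((E - C) \<union> (E - C'))"
    using rank_mono[of "insert f (E - C')"] cocircuit_add_back[OF c' f(1)] by simp
  moreover have "rk ((E - C) \<union> (E - C')) \<le> rk E" by (rule rank_mono) auto
  ultimately have "rk ((E - C) \<inter> (E - C')) + 2 \<le> rk E"
    using rank_submodular[of "E - C" "E - C'"] cocircuit_hyperplane[OF c] cocircuit_hyperplane[OF c']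
    by linarith
  then have "rk (insert e ((E - C) \<inter> (E - C'))) < rk E"
    using rank_insert_le[of e "(E - C) \<inter> (E - C')"] by linarith
  moreover have "E - ((C \<union> C') - {e}) = insert e ((E - C) \<inter> (E - C'))"
    using e cocircuit_subset_E[OF c] by blast
  ultimately show ?thesis using meets_all_bases_iff by simp
qed

lemma small_cocircuit_meets_packing:
  assumes F: "basis_packing F" "finite F" and c: "cocircuit E indep C" "card C \<le> card F"
  shows "\<forall>B\<in>F. card (C \<inter> B) = 1" and "C \<subseteq> \<Union>F"
proof -
  have "finite C" using cocircuit_subset_E[OF c(1)] finite_E finite_subset by blast
  moreover have "\<forall>B\<in>F. C \<inter> B \<noteq> {}" using F(1) cocircuit_meets_basis[OF c(1)] unfolding basis_packing_def by blast
  ultimately show "\<forall>B\<in>F. card (C \<inter> B) = 1" and "C \<subseteq> \<Union>F"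
    using small_transversal[of C F] F c(2) unfolding basis_packing_def by blast+
qed

text \<open>Hence distinct cocircuits of size at most |F| are disjoint: both meet the base of
  F through a common element e only in e, contradicting elimination.\<close>

lemma small_cocircuits_disjoint:
  assumes F: "basis_packing F" "finite F"
    and c: "cocircuit E indep C" "card C \<le> card F"
    and c': "cocircuit E indep C'" "card C' \<le> card F"
    and ne: "C \<noteq> C'"
  shows "C \<inter> C' = {}"
proof (rule ccontr)
  assume "C \<inter> C' \<noteq> {}"
  then obtain e where e: "e \<in> C" "e \<in> C'" by blast
  note once = small_cocircuit_meets_packing[OF F c] and once' = small_cocircuit_meets_packing[OF F c']
  obtain B where B: "B \<in> F" "e \<in> B" using once(2) e(1) by blast
  have single: "X \<inter> B = {e}" if "card (X \<inter> B) = 1" "e \<in> X" for X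
    using that B(2) by (metis IntI card_1_singletonE singletonD)
  have "C \<inter> B = {e}" "C' \<inter> B = {e}"
    using single once(1) once'(1) B(1) e by blast+
  then have "((C \<union> C') - {e}) \<inter> B = {}" by blast
  moreover have "basis E indep B" using F(1) B(1) unfolding basis_packing_def by blast
  ultimately show False using cocircuit_elimination[OF c(1) c'(1) ne e] by blast
qed

lemma rank_delete_disjoint_cocircuits:
  assumes "finite T" "\<forall>C\<in>T. cocircuit E indep C"
    and "\<forall>C1\<in>T. \<forall>C2\<in>T. C1 \<noteq> C2 \<longrightarrow> C1 \<inter> C2 = {}"
  shows "rk (E - \<Union>T) + card T \<le> rk E"
  using assms
proof (induction T rule: finite_induct)
  case (insert C T)
  have c: "cocircuit E indep C" using insert.prems(1) by blast
  have "C \<inter> C' = {}" if "C' \<in> T" for C'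
    using insert.prems(2) insert.hyps(2) that by (metis insertCI)
  then have "C \<subseteq> E - \<Union>T" using cocircuit_subset_E[OF c] by blast
  then have "rk ((E - \<Union>T) - C) < rk (E - \<Union>T)" by (intro cocircuit_drop_within[OF c]) auto
  moreover have "E - \<Union>(insert C T) = (E - \<Union>T) - C" by auto
  ultimately show ?case using insert by simp
qed simp

lemma rank_delete_lower_bound:
  assumes b: "basis E indep B" and S: "finite S" "\<forall>C\<in>S. card (B \<inter> C) \<le> 1"
  shows "rk E \<le> rk (E - \<Union>S) + card S"
proof -
  have indB: "indep B" "card B = rk E" using b by (simp_all add: basis_iff_full_rank)
  have "B \<inter> \<Union>S = (\<Union>C\<in>S. B \<inter> C)" by blast
  then have "card (B \<inter> \<Union>S) \<le> (\<Sum>C\<in>S. card (B \<inter> C))"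
    using card_UN_le[OF S(1), of "\<lambda>C. B \<inter> C"] by simp
  also have "\<dots> \<le> (\<Sum>C\<in>S. 1)" using S(2) by (intro sum_mono) blast
  also have "\<dots> = card S" by simp
  finally have "card (B \<inter> \<Union>S) \<le> card S" .
  moreover have "card B = card (B - \<Union>S) + card (B \<inter> \<Union>S)"
    using card_Int_Diff[OF indep_finite[OF indB(1)], of "\<Union>S"] by linarith
  moreover have "card (B - \<Union>S) \<le> rk (E - \<Union>S)"
  proof (rule card_le_rank)
    show "B - \<Union>S \<subseteq> E - \<Union>S" using indep_subset_E[OF indB(1)] by blast
    show "indep (B - \<Union>S)" using indep_subset[OF indB(1)] by blast
  qed
  ultimately show ?thesis using indB by linarith
qed

lemma rank_delete_tight_cocircuits:
  assumes F: "basis_packing F" "finite F"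
    and S: "\<forall>C\<in>S. cocircuit E indep C \<and> card C \<le> card F"
  shows "rk (E - \<Union>S) + card S = rk E"
proof (cases "S = {}")
  case False
  have "S \<subseteq> Pow E" using S cocircuit_subset_E by blast
  then have finS: "finite S" using finite_E by (simp add: finite_subset)
  obtain C0 where "C0 \<in> S" using False by blast
  then have C0: "cocircuit E indep C0" "card C0 \<le> card F" using S by auto
  have "finite C0" using cocircuit_subset_E[OF C0(1)] finite_E finite_subset by blast
  then have "0 < card C0" using cocircuit_nonempty[OF C0(1)] by (simp add: card_gt_0_iff)
  then have "F \<noteq> {}" using C0(2) by auto
  then obtain B where B: "B \<in> F" by blast
  have "\<forall>C1\<in>S. \<forall>C2\<in>S. C1 \<noteq> C2 \<longrightarrow> C1 \<inter> C2 = {}"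
    using small_cocircuits_disjoint[OF F] S by simp
  then have "rk (E - \<Union>S) + card S \<le> rk E"
    using rank_delete_disjoint_cocircuits[OF finS] S by blast
  moreover have "rk E \<le> rk (E - \<Union>S) + card S"
  proof (rule rank_delete_lower_bound[OF _ finS])
    show "basis E indep B" using F(1) B unfolding basis_packing_def by blast
    show "\<forall>C\<in>S. card (B \<inter> C) \<le> 1"
      using small_cocircuit_meets_packing(1)[OF F] S B by (simp add: Int_commute)
  qed
  ultimately show ?thesis by linarith
qed simp

lemma sigma_attained: "\<exists>F. basis_packing F \<and> finite F \<and> card F = matroid_sigma E indep"
proof -
  define SF where "SF = {card F | F. basis_packing F}"
  have packing_Pow: "F \<subseteq> Pow E" if "basis_packing F" for F
  proof
    fix B assume "B \<in> F"
    then have "indep B" using that unfolding basis_packing_def basis_def by blast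
    then show "B \<in> Pow E" using indep_subset_E by blast
  qed
  have "card F \<le> card (Pow E)" if "basis_packing F" for F
    using packing_Pow[OF that] finite_E by (simp add: card_mono)
  then have "SF \<subseteq> {..card (Pow E)}" unfolding SF_def by blast
  then have "finite SF" by (rule finite_subset) simp
  moreover have "0 \<in> SF" unfolding SF_def basis_packing_def by force
  ultimately have "Max SF \<in> SF" by (intro Max_in) auto
  moreover have "matroid_sigma E indep = Max SF"
    unfolding matroid_sigma_def SF_def basis_packing_def ..
  ultimately obtain F where F: "basis_packing F" "card F = matroid_sigma E indep"
    unfolding SF_def by auto
  moreover have "finite F" using packing_Pow[OF F(1)] finite_E finite_subset by blast
  ultimately show ?thesis by blast
qed

end

theorem mainTheorem9:
  fixes E :: "'a set" and indep :: "'a set \<Rightarrow> bool" and k r :: nat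
  assumes "matroid E indep"
    and "matroid_lambda E indep = k"
    and "matroid_sigma E indep = k"
    and "matroid_rank E indep = r"
  shows "int (matroid_rank (fst (crux E indep)) (snd (crux E indep)))
           = int r - int (card {C. cocircuit E indep C \<and> card C = k})"
proof -
  interpret finite_matroid E indep using assms(1) by (rule finite_matroid.intro)
  define S where "S = {C. cocircuit E indep C \<and> card C = k}"
  obtain F where F: "basis_packing F" "finite F" "card F = k"
    using sigma_attained assms(3) by blast
  have "mrank E indep (E - \<Union>S) + card S = r"
    using rank_delete_tight_cocircuits[OF F(1,2), of S] F(3) assms(4)
    unfolding S_def matroid_rank_def by simp
  moreover have "matroid_rank (fst (crux E indep)) (snd (crux E indep)) = mrank E indep (E - \<Union>S)"
    unfolding crux_def rank_of_deletion assms(2) S_def ..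
  ultimately have "int (matroid_rank (fst (crux E indep)) (snd (crux E indep))) = int r - int (card S)"
    by linarith
  then show ?thesis unfolding S_def .
qed

end
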